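(* Let $n$ be a positive integer and let $r_\star$ be an integer maximising $q_n^r$ over $r$. Then either \[ r_\star = \left\lceil \frac{1}{10}\left(5n+2-\sqrt{5n^2+20n+24}\right)\right\rceil \] or \[ r_\star = \frac{1}{10}\left(5n+2-\sqrt{5n^2+20n+24}\right)+1. \]
   Context: $P_n$ is the path on $[n]=\{1,\dots,n\}$ with edges $\{i,i+1\}$. $Q^{(r)}(P_n)$ is the family of $r$-element subsets of $[n]$ containing no two consecutive integers, and $q_n^r=|Q^{(r)}(P_n)|$. *)

theory Defs
  imports Complex_Main
begin

definition Qfam :: "nat \<Rightarrow> nat \<Rightarrow> nat set set" where
  "Qfam n r = {S. S \<subseteq> {1..n} \<and> card S = r \<and> (\<forall>i. \<not> (i \<in> S \<and> Suc i \<in> S))}"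

definition qnum :: "nat \<Rightarrow> nat \<Rightarrow> nat" where
  "qnum n r = card (Qfam n r)"

end

theory Submission
  imports Defs
begin

text \<open>Splitting on whether \<open>n + 2\<close> belongs to the set gives
\<open>qnum (n + 2) (r + 1) = qnum (n + 1) (r + 1) + qnum n r\<close>, hence
\<open>qnum n r = (n + 1 - r) choose r\<close>. For \<open>2r \<le> n\<close> this yields
\<open>qnum n (r + 1) / qnum n r = (n - 2r)(n - 2r + 1) / ((r + 1)(n + 1 - r))\<close>, whose numerator
minus denominator is \<open>5r\<^sup>2 - (5n + 2)r + n\<^sup>2 - 1\<close>. In that range of \<open>r\<close> the quadratic is
positive exactly below its smaller root \<open>r\<^sub>0\<close> and negative exactly above it. So a
maximiser \<open>r\<close> satisfies \<open>r \<ge> r\<^sub>0\<close> (else \<open>qnum n r < qnum n (r + 1)\<close>) and \<open>r - 1 \<le> r\<^sub>0\<close>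
(else \<open>qnum n r < qnum n (r - 1)\<close>), and the only such numbers are \<open>\<lceil>r\<^sub>0\<rceil>\<close> and \<open>r\<^sub>0 + 1\<close>.\<close>

lemma mult_eq_imp_less_iff:
  fixes a b x y :: "'a :: linordered_semidom"
  assumes "a * x = b * y" "0 < b" "0 < x"
  shows "b < a \<longleftrightarrow> x < y" and "a < b \<longleftrightarrow> y < x"
proof -
  have "b < a \<longleftrightarrow> b * x < a * x" "a < b \<longleftrightarrow> a * x < b * x"
    using \<open>0 < x\<close> by (auto intro: mult_strict_right_mono elim: mult_right_less_imp_less)
  moreover have "x < y \<longleftrightarrow> b * x < b * y" "y < x \<longleftrightarrow> b * y < b * x"
    using \<open>0 < b\<close> by (auto intro: mult_strict_left_mono elim: mult_left_less_imp_less)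
  ultimately show "b < a \<longleftrightarrow> x < y" and "a < b \<longleftrightarrow> y < x"
    using \<open>a * x = b * y\<close> by simp_all
qed

lemma of_int_eq_ceiling_or_plus_one:
  fixes x :: "'a :: floor_ceiling"
  assumes "x \<le> of_int k" "of_int k \<le> x + 1"
  shows "of_int k = of_int \<lceil>x\<rceil> \<or> of_int k = x + 1"
proof (cases "k = \<lceil>x\<rceil>")
  case False
  with assms(1) have "\<lceil>x\<rceil> < k"
    by (simp add: ceiling_le_iff order.not_eq_order_implies_strict)
  then have "of_int \<lceil>x\<rceil> + 1 \<le> (of_int k :: 'a)"
    by (metis of_int_1 of_int_add of_int_le_iff zless_imp_add1_zle)
  with assms(2) le_of_int_ceiling[of x] show ?thesis
    by linarith
qed simp

lemma Suc_times_binomial_Suc_add: "Suc r * (m + r choose Suc r) = m * (m + r choose r)"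
proof (cases m)
  case (Suc b)
  then show ?thesis
    using Suc_times_binomial_add[of r b] by (simp add: add.commute)
qed simp

lemma binomial_consecutive_ratio:
  "(m + r choose Suc r) * (Suc r * (m + r + 1)) = (m + r + 1 choose r) * (m * (m + 1))"
proof -
  have "(m + r choose Suc r) * (Suc r * (m + r + 1)) = m * ((m + r + 1) * (m + r choose r))"
    by (metis Suc_times_binomial_Suc_add mult.assoc mult.commute)
  also have "(m + r + 1) * (m + r choose r) = (m + 1) * (m + r + 1 choose r)"
    using binomial_absorb_comp[of "m + r + 1" r] by simp
  finally show ?thesis
    by (simp only: ac_simps)
qed

lemma finite_Qfam: "finite (Qfam n r)"
  by (rule finite_subset[of _ "Pow {1..n}"]) (auto simp: Qfam_def)

lemma Qfam_0_right: "Qfam n 0 = {{}}"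
  by (auto simp: Qfam_def dest: finite_subset[OF _ finite_atLeastAtMost])

lemma Qfam_0_Suc: "Qfam 0 (Suc r) = {}"
  by (auto simp: Qfam_def)

lemma Qfam_1_Suc: "Qfam (Suc 0) (Suc r) = (if r = 0 then {{1}} else {})"
proof -
  have "S \<subseteq> {1} \<and> card S = Suc r \<longleftrightarrow> r = 0 \<and> S = {1}" for S :: "nat set"
    by (auto simp: subset_singleton_iff)
  then show ?thesis
    by (auto simp: Qfam_def)
qed

lemma in_Qfam_Suc_iff:
  assumes "Suc n \<notin> S"
  shows "S \<in> Qfam (Suc n) r \<longleftrightarrow> S \<in> Qfam n r"
  using assms by (auto simp: Qfam_def le_Suc_eq)

lemma insert_in_Qfam_iff:
  assumes "Suc (Suc n) \<notin> T"
  shows "insert (Suc (Suc n)) T \<in> Qfam (Suc (Suc n)) (Suc r) \<longleftrightarrow> T \<in> Qfam n r"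
proof
  assume "insert (Suc (Suc n)) T \<in> Qfam (Suc (Suc n)) (Suc r)"
  then have "T \<subseteq> {1..Suc (Suc n)}" "Suc n \<notin> T" "card (insert (Suc (Suc n)) T) = Suc r"
    and "\<forall>i. \<not> (i \<in> T \<and> Suc i \<in> T)"
    by (auto simp: Qfam_def)
  moreover from this have "T \<subseteq> {1..n}"
    using assms by (auto simp: le_Suc_eq)
  ultimately show "T \<in> Qfam n r"
    using assms by (auto simp: Qfam_def dest: finite_subset[OF _ finite_atLeastAtMost])
next
  assume T: "T \<in> Qfam n r"
  then have "finite T" "T \<subseteq> {1..n}"
    by (auto simp: Qfam_def intro: finite_subset)
  with T show "insert (Suc (Suc n)) T \<in> Qfam (Suc (Suc n)) (Suc r)"
    by (auto simp: Qfam_def card_insert_if)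
qed

lemma Qfam_Suc_Suc:
  "Qfam (Suc (Suc n)) (Suc r) = Qfam (Suc n) (Suc r) \<union> insert (Suc (Suc n)) ` Qfam n r"
proof (intro set_eqI iffI)
  fix S assume S: "S \<in> Qfam (Suc (Suc n)) (Suc r)"
  show "S \<in> Qfam (Suc n) (Suc r) \<union> insert (Suc (Suc n)) ` Qfam n r"
  proof (cases "Suc (Suc n) \<in> S")
    case True
    then have "S = insert (Suc (Suc n)) (S - {Suc (Suc n)})"
      by blast
    moreover from this have "S - {Suc (Suc n)} \<in> Qfam n r"
      using S insert_in_Qfam_iff[of n "S - {Suc (Suc n)}" r] by simp
    ultimately show ?thesis
      by blast
  qed (use S in_Qfam_Suc_iff in blast)
next
  fix S assume "S \<in> Qfam (Suc n) (Suc r) \<union> insert (Suc (Suc n)) ` Qfam n r"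
  then show "S \<in> Qfam (Suc (Suc n)) (Suc r)"
  proof
    assume "S \<in> insert (Suc (Suc n)) ` Qfam n r"
    then obtain T where "T \<in> Qfam n r" "S = insert (Suc (Suc n)) T"
      by blast
    moreover from this have "Suc (Suc n) \<notin> T"
      by (auto simp: Qfam_def)
    ultimately show ?thesis
      by (simp add: insert_in_Qfam_iff)
  qed (auto simp: Qfam_def)
qed

lemma qnum_Suc_Suc: "qnum (Suc (Suc n)) (Suc r) = qnum (Suc n) (Suc r) + qnum n r"
proof -
  have "\<forall>T \<in> Qfam n r. Suc (Suc n) \<notin> T"
    by (auto simp: Qfam_def)
  then have "inj_on (insert (Suc (Suc n))) (Qfam n r)"
    by (auto intro!: inj_onI simp: insert_ident)
  moreover have "Qfam (Suc n) (Suc r) \<inter> insert (Suc (Suc n)) ` Qfam n r = {}"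
    by (auto simp: Qfam_def)
  ultimately show ?thesis
    unfolding qnum_def Qfam_Suc_Suc
    by (simp add: card_Un_disjoint finite_Qfam card_image)
qed

lemma qnum_eq_binomial: "qnum n r = (n + 1 - r) choose r"
proof (induction n arbitrary: r rule: induct_nat_012)
  case 0
  then show ?case
    by (cases r) (simp_all add: qnum_def Qfam_0_right Qfam_0_Suc)
next
  case 1
  then show ?case
    by (cases r) (simp_all add: qnum_def Qfam_0_right Qfam_1_Suc)
next
  case (ge2 n)
  show ?case
  proof (cases r)
    case (Suc k)
    then show ?thesis
      using ge2 by (cases "k \<le> Suc n") (simp_all add: qnum_Suc_Suc Suc_diff_le)
  qed (simp add: qnum_def Qfam_0_right)
qed

lemma qnum_Suc_mult_eq:
  assumes "2 * r \<le> n"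
  shows "qnum n (Suc r) * ((r + 1) * (n + 1 - r)) = qnum n r * ((n - 2 * r) * (n - 2 * r + 1))"
proof -
  obtain m where n: "n = m + 2 * r"
    using assms by (metis le_add_diff_inverse2)
  then have "qnum n (Suc r) = (m + r choose Suc r)" "qnum n r = (m + r + 1 choose r)"
    and "n + 1 - r = m + r + 1" "n - 2 * r = m"
    by (simp_all add: qnum_eq_binomial add.commute)
  then show ?thesis
    using binomial_consecutive_ratio[of m r] by simp
qed

text \<open>\<open>r\<^sub>0\<close>, the smaller root of \<open>5x\<^sup>2 - (5n + 2)x + n\<^sup>2 - 1\<close>.\<close>

definition peak_root :: "nat \<Rightarrow> real" where
  "peak_root n = (5 * real n + 2 - sqrt (5 * (real n)^2 + 20 * real n + 24)) / 10"

lemma peak_root_bounds: "-1 \<le> peak_root n" "peak_root n < real n / 2"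
proof -
  have "sqrt (5 * (real n)^2 + 20 * real n + 24) \<le> sqrt ((5 * real n + 12)^2)"
    by (simp add: power2_eq_square algebra_simps)
  moreover have "2 < sqrt (5 * (real n)^2 + 20 * real n + 24)"
    by (rule real_less_rsqrt) (simp add: add_pos_nonneg)
  ultimately show "-1 \<le> peak_root n" "peak_root n < real n / 2"
    by (simp_all add: peak_root_def)
qed

lemma peak_root_sign:
  fixes x :: real
  assumes "10 * x \<le> 5 * real n + 2"
  shows "0 < 5 * x^2 - (5 * real n + 2) * x + (real n)^2 - 1 \<longleftrightarrow> x < peak_root n"
    and "5 * x^2 - (5 * real n + 2) * x + (real n)^2 - 1 < 0 \<longleftrightarrow> peak_root n < x"
proof -
  define D where "D = 5 * (real n)^2 + 20 * real n + 24"
  define t where "t = 5 * real n + 2 - 10 * x"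
  define g where "g = 5 * x^2 - (5 * real n + 2) * x + (real n)^2 - 1"
  have "20 * g = t^2 - D"
    by (simp add: D_def t_def g_def power2_eq_square algebra_simps)
  moreover have "x < peak_root n \<longleftrightarrow> sqrt D < sqrt (t^2)" "peak_root n < x \<longleftrightarrow> sqrt (t^2) < sqrt D"
    using assms by (auto simp: peak_root_def D_def t_def)
  ultimately show "0 < g \<longleftrightarrow> x < peak_root n" and "g < 0 \<longleftrightarrow> peak_root n < x"
    unfolding real_sqrt_less_iff by linarith+
qed

lemma qnum_Suc_less_iff:
  assumes "2 * r \<le> n"
  shows "qnum n r < qnum n (Suc r) \<longleftrightarrow> real r < peak_root n"
    and "qnum n (Suc r) < qnum n r \<longleftrightarrow> peak_root n < real r"
proof -
  define X where "X = (r + 1) * (n + 1 - r)"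
  define Y where "Y = (n - 2 * r) * (n - 2 * r + 1)"
  obtain m where n: "n = m + 2 * r"
    using assms by (metis le_add_diff_inverse2)
  have "real Y - real X = 5 * (real r)^2 - (5 * real n + 2) * real r + (real n)^2 - 1"
    by (simp add: X_def Y_def n power2_eq_square algebra_simps)
  moreover have "10 * real r \<le> 5 * real n + 2"
    by (simp add: n)
  moreover have "0 < qnum n r" "0 < X"
    by (simp_all add: X_def n qnum_eq_binomial)
  then have "qnum n r < qnum n (Suc r) \<longleftrightarrow> X < Y" "qnum n (Suc r) < qnum n r \<longleftrightarrow> Y < X"
    using mult_eq_imp_less_iff qnum_Suc_mult_eq[OF assms] unfolding X_def Y_def by blast+
  ultimately show "qnum n r < qnum n (Suc r) \<longleftrightarrow> real r < peak_root n"
    and "qnum n (Suc r) < qnum n r \<longleftrightarrow> peak_root n < real r"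
    using peak_root_sign[of "real r" n] by linarith+
qed

lemma qnum_maximiser_bounds:
  assumes max: "\<And>r. qnum n r \<le> qnum n rs"
  shows "peak_root n \<le> real rs" and "real rs \<le> peak_root n + 1"
proof -
  have "0 < qnum n rs"
    using max[of 0] by (simp add: qnum_eq_binomial Suc_le_eq)
  then have "2 * rs \<le> n + 1"
    unfolding qnum_eq_binomial zero_less_binomial_iff by arith
  show "peak_root n \<le> real rs"
  proof (rule ccontr)
    assume "\<not> peak_root n \<le> real rs"
    moreover from this have "2 * rs \<le> n"
      using peak_root_bounds(2)[of n] by linarith
    ultimately have "qnum n rs < qnum n (Suc rs)"
      by (simp add: qnum_Suc_less_iff)
    with max show False
      by (simp add: not_less[symmetric])
  qed
  show "real rs \<le> peak_root n + 1"
  proof (rule ccontr)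
    assume "\<not> real rs \<le> peak_root n + 1"
    then obtain r where "rs = Suc r" "peak_root n < real r"
      using peak_root_bounds(1)[of n] by (cases rs) auto
    moreover from this have "2 * r \<le> n"
      using \<open>2 * rs \<le> n + 1\<close> by simp
    ultimately have "qnum n rs < qnum n r"
      by (simp add: qnum_Suc_less_iff)
    with max show False
      by (simp add: not_less[symmetric])
  qed
qed

theorem mainTheorem3:
  fixes n rs :: nat
  assumes "n \<ge> 1"
    and "\<forall>r. qnum n r \<le> qnum n rs"
  shows "real rs = of_int \<lceil>(5 * real n + 2 - sqrt (5 * (real n)^2 + 20 * real n + 24)) / 10\<rceil>
       \<or> real rs = (5 * real n + 2 - sqrt (5 * (real n)^2 + 20 * real n + 24)) / 10 + 1"
proof -
  have "peak_root n \<le> real rs" "real rs \<le> peak_root n + 1"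
    using qnum_maximiser_bounds assms(2) by blast+
  then have "real rs = of_int \<lceil>peak_root n\<rceil> \<or> real rs = peak_root n + 1"
    using of_int_eq_ceiling_or_plus_one[of "peak_root n" "int rs"] by simp
  then show ?thesis
    unfolding peak_root_def .
qed

end
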